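(* Let $\mathbb W$ and $\mathbb W_i$ be as in the context. For $2\le i\ne j\le n$, the subgroup $\mathbb W_i$ is not conjugate to $\mathbb W_j$ in $\mathbb W$.
   Context: Fix an integer $n\ge 3$, pairwise distinct odd integers $m_1,\dots,m_l\ge 3$ and positive integers $k_1,\dots,k_l$ with $k_1+\cdots+k_l=n-1$. Partition $\{2,\dots,n\}$ into consecutive blocks $A_1=\{2,\dots,k_1+1\}$, $A_2=\{k_1+2,\dots,k_1+k_2+1\}$, …, $A_l$ (of sizes $k_1,\dots,k_l$), and put $t_i=m_j$ for $i\in A_j$. The star group is $\mathbb W=\langle w_1,\dots,w_n\mid w_j^2=1\ (1\le j\le n),\ (w_1w_i)^{t_i}=1\ (2\le i\le n)\rangle$. For $2\le i\le n$ let $\mathbb W_i=\langle w_1,w_i\rangle$. *)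

theory Defs
  imports "HOL-Algebra.Algebra"
begin

text \<open>The group presented by generators w_1..w_n (all involutions) and relations
  (w_1 w_i)^(t i) = 1 for 2 <= i <= n, built concretely: elements are classes of
  words over {1..n} (letter j standing for w_j; since every generator is an involution
  no inverse letters are needed) modulo insertion/deletion of relators.\<close>

definition relators :: "nat \<Rightarrow> (nat \<Rightarrow> nat) \<Rightarrow> nat list set" where
  "relators n t = {[j, j] | j. 1 \<le> j \<and> j \<le> n}
     \<union> {concat (replicate (t i) [1, i]) | i. 2 \<le> i \<and> i \<le> n}"

definition wstep :: "nat \<Rightarrow> (nat \<Rightarrow> nat) \<Rightarrow> (nat list \<times> nat list) set" where
  "wstep n t = {(a @ r @ b, a @ b) | a r b. r \<in> relators n t}"

definition weq :: "nat \<Rightarrow> (nat \<Rightarrow> nat) \<Rightarrow> (nat list \<times> nat list) set" where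
  "weq n t = (wstep n t \<union> (wstep n t)\<inverse>)\<^sup>*"

definition W :: "nat \<Rightarrow> (nat \<Rightarrow> nat) \<Rightarrow> nat list set monoid" where
  "W n t = \<lparr> carrier = {ws. set ws \<subseteq> {1..n}} // weq n t,
             monoid.mult = (\<lambda>A B. weq n t `` {(SOME a. a \<in> A) @ (SOME b. b \<in> B)}),
             monoid.one = weq n t `` {[]} \<rparr>"

definition gen :: "nat \<Rightarrow> (nat \<Rightarrow> nat) \<Rightarrow> nat \<Rightarrow> nat list set" where
  "gen n t j = weq n t `` {[j]}"

definition Wsub :: "nat \<Rightarrow> (nat \<Rightarrow> nat) \<Rightarrow> nat \<Rightarrow> nat list set set" where
  "Wsub n t i = generate (W n t) {gen n t 1, gen n t i}"

end

theory Submission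
  imports Defs
begin

text \<open>Send \<open>w\<^sub>i\<close> to the reflection \<open>x \<mapsto> 1 - x\<close> of \<open>\<int>/t\<^sub>i\<close> and every other generator to
  \<open>x \<mapsto> -x\<close>. All relations of \<open>W\<close> hold, since the product of the two reflections is a rotation
  of order \<open>t\<^sub>i\<close>, so this defines a homomorphism \<open>h\<close> from \<open>W\<close> to the dihedral group of
  order \<open>2 t\<^sub>i\<close>. It maps \<open>W\<^sub>j\<close> onto the two-element group generated by \<open>x \<mapsto> -x\<close>, whereas
  \<open>h(W\<^sub>i)\<close> contains the identity and two distinct reflections. As \<open>h\<close> maps conjugate subgroups to
  conjugate subgroups, which have the same size, \<open>W\<^sub>i\<close> and \<open>W\<^sub>j\<close> are not conjugate.\<close>

lemma weq_refl: "(x, x) \<in> weq n t"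
  by (simp add: weq_def)

lemma sym_weq: "sym (weq n t)"
  unfolding weq_def by (intro sym_rtrancl) (simp add: sym_Un_converse)

lemma weq_sym: "(x, y) \<in> weq n t \<Longrightarrow> (y, x) \<in> weq n t"
  using sym_weq by (rule symD)

lemma weq_trans: "(x, y) \<in> weq n t \<Longrightarrow> (y, z) \<in> weq n t \<Longrightarrow> (x, z) \<in> weq n t"
  unfolding weq_def by (rule rtrancl_trans)

lemma equiv_weq: "equiv UNIV (weq n t)"
  by (intro equivI refl_onI sym_weq transI) (auto intro: weq_refl weq_trans)

lemma wstep_append:
  assumes "(u, v) \<in> wstep n t"
  shows "(x @ u @ y, x @ v @ y) \<in> wstep n t"
proof -
  from assms obtain a r b where "u = a @ r @ b" "v = a @ b" and r: "r \<in> relators n t"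
    unfolding wstep_def by blast
  then have "x @ u @ y = (x @ a) @ r @ (b @ y)" "x @ v @ y = (x @ a) @ (b @ y)"
    by simp_all
  with r show ?thesis
    unfolding wstep_def by blast
qed

lemma weq_append_context:
  assumes "(u, v) \<in> weq n t"
  shows "(x @ u @ y, x @ v @ y) \<in> weq n t"
  using assms unfolding weq_def
proof (induction rule: rtrancl_induct)
  case (step b c)
  then have "(x @ b @ y, x @ c @ y) \<in> wstep n t \<union> (wstep n t)\<inverse>"
    using wstep_append by blast
  with step.IH show ?case by (rule rtrancl_into_rtrancl)
qed simp

lemma weq_append:
  assumes "(u, u') \<in> weq n t" "(v, v') \<in> weq n t"
  shows "(u @ v, u' @ v') \<in> weq n t"
  using weq_append_context[OF assms(1), of "[]" v] weq_append_context[OF assms(2), of u' "[]"]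
  by (auto intro: weq_trans)

lemma some_in_weq_class: "(a, SOME x. x \<in> weq n t `` {a}) \<in> weq n t"
  using someI[of "\<lambda>x. x \<in> weq n t `` {a}" a] by (simp add: weq_refl)

lemma weq_class_eq: "(a, b) \<in> weq n t \<Longrightarrow> weq n t `` {a} = weq n t `` {b}"
  using equiv_class_eq[OF equiv_weq] .

lemma carrier_W: "Q \<in> carrier (W n t) \<longleftrightarrow> (\<exists>a. set a \<subseteq> {1..n} \<and> Q = weq n t `` {a})"
  unfolding W_def quotient_def by auto

lemma one_W: "\<one>\<^bsub>W n t\<^esub> = weq n t `` {[]}"
  by (simp add: W_def)

lemma mult_W: "weq n t `` {a} \<otimes>\<^bsub>W n t\<^esub> weq n t `` {b} = weq n t `` {a @ b}"
  unfolding W_def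
  using weq_append[OF weq_sym[OF some_in_weq_class] weq_sym[OF some_in_weq_class]]
  by (simp add: weq_class_eq)

lemma weq_rev_append_cancel: "set a \<subseteq> {1..n} \<Longrightarrow> (rev a @ a, []) \<in> weq n t"
proof (induction a)
  case (Cons x a)
  have "[x, x] \<in> relators n t"
    using Cons.prems unfolding relators_def by auto
  then have "(rev a @ [x, x] @ a, rev a @ a) \<in> wstep n t"
    unfolding wstep_def by blast
  then have "(rev (x # a) @ x # a, rev a @ a) \<in> weq n t"
    unfolding weq_def by auto
  with Cons show ?case by (auto intro: weq_trans)
qed (simp add: weq_refl)

lemma group_W: "group (W n t)"
proof (rule groupI)
  fix x y
  assume "x \<in> carrier (W n t)" "y \<in> carrier (W n t)"
  then obtain a b where "set a \<subseteq> {1..n}" "x = weq n t `` {a}" "set b \<subseteq> {1..n}" "y = weq n t `` {b}"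
    unfolding carrier_W by blast
  then show "x \<otimes>\<^bsub>W n t\<^esub> y \<in> carrier (W n t)"
    unfolding carrier_W by (intro exI[of _ "a @ b"]) (auto simp: mult_W)
next
  show "\<one>\<^bsub>W n t\<^esub> \<in> carrier (W n t)"
    unfolding carrier_W one_W by (intro exI[of _ "[]"]) auto
next
  fix x y z
  assume "x \<in> carrier (W n t)" "y \<in> carrier (W n t)" "z \<in> carrier (W n t)"
  then show "x \<otimes>\<^bsub>W n t\<^esub> y \<otimes>\<^bsub>W n t\<^esub> z = x \<otimes>\<^bsub>W n t\<^esub> (y \<otimes>\<^bsub>W n t\<^esub> z)"
    unfolding carrier_W by (auto simp: mult_W)
next
  fix x
  assume "x \<in> carrier (W n t)"
  then show "\<one>\<^bsub>W n t\<^esub> \<otimes>\<^bsub>W n t\<^esub> x = x"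
    unfolding carrier_W by (auto simp: mult_W one_W)
next
  fix x
  assume "x \<in> carrier (W n t)"
  then obtain a where a: "set a \<subseteq> {1..n}" "x = weq n t `` {a}"
    unfolding carrier_W by auto
  then have "weq n t `` {rev a} \<otimes>\<^bsub>W n t\<^esub> x = \<one>\<^bsub>W n t\<^esub>"
    by (simp add: mult_W one_W weq_class_eq weq_rev_append_cancel)
  moreover have "weq n t `` {rev a} \<in> carrier (W n t)"
    using a(1) unfolding carrier_W by (intro exI[of _ "rev a"]) auto
  ultimately show "\<exists>y\<in>carrier (W n t). y \<otimes>\<^bsub>W n t\<^esub> x = \<one>\<^bsub>W n t\<^esub>"
    by blast
qed

lemma gen_in_carrier_W: "1 \<le> p \<Longrightarrow> p \<le> n \<Longrightarrow> gen n t p \<in> carrier (W n t)"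
  unfolding gen_def carrier_W by (auto intro!: exI[of _ "[p]"])

lemma Wsub_in_carrier_W:
  assumes "2 \<le> p" "p \<le> n"
  shows "Wsub n t p \<subseteq> carrier (W n t)"
proof -
  have gens: "{gen n t 1, gen n t p} \<subseteq> carrier (W n t)"
    using assms by (simp add: gen_in_carrier_W)
  show ?thesis
    unfolding Wsub_def using group.generate_in_carrier[OF group_W gens] by blast
qed

definition word_eval :: "('a, 'b) monoid_scheme \<Rightarrow> (nat \<Rightarrow> 'a) \<Rightarrow> nat list \<Rightarrow> 'a" where
  "word_eval G f w = foldr (\<lambda>x y. f x \<otimes>\<^bsub>G\<^esub> y) w \<one>\<^bsub>G\<^esub>"

definition W_lift :: "('a, 'b) monoid_scheme \<Rightarrow> (nat \<Rightarrow> 'a) \<Rightarrow> nat list set \<Rightarrow> 'a" where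
  "W_lift G f Q = word_eval G f (SOME w. w \<in> Q)"

locale W_representation = group G for G (structure) +
  fixes n :: nat and t :: "nat \<Rightarrow> nat" and f :: "nat \<Rightarrow> 'a"
  assumes f_closed: "f x \<in> carrier G"
    and f_involution: "1 \<le> j \<Longrightarrow> j \<le> n \<Longrightarrow> f j \<otimes> f j = \<one>"
    and f_power_relation: "2 \<le> p \<Longrightarrow> p \<le> n \<Longrightarrow> (f 1 \<otimes> f p) [^] t p = \<one>"
begin

lemma word_eval_closed: "word_eval G f w \<in> carrier G"
  by (induction w) (simp_all add: word_eval_def f_closed)

lemma word_eval_append: "word_eval G f (u @ v) = word_eval G f u \<otimes> word_eval G f v"
  by (induction u) (simp_all add: word_eval_def f_closed m_assoc word_eval_closed[unfolded word_eval_def])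

lemma word_eval_concat_replicate:
  "word_eval G f (concat (replicate m u)) = word_eval G f u [^] m"
proof (induction m)
  case 0
  then show ?case by (simp add: word_eval_def)
next
  case (Suc m)
  have "word_eval G f (concat (replicate (Suc m) u)) = word_eval G f u \<otimes> word_eval G f u [^] m"
    using Suc.IH by (simp add: word_eval_append)
  also have "\<dots> = word_eval G f u [^] Suc m"
    by (rule nat_pow_Suc2[OF word_eval_closed, symmetric])
  finally show ?case .
qed

lemma word_eval_relator: "r \<in> relators n t \<Longrightarrow> word_eval G f r = \<one>"
  unfolding relators_def
proof (elim UnE CollectE exE conjE)
  fix j
  assume "r = [j, j]" "1 \<le> j" "j \<le> n"
  then show ?thesis by (simp add: word_eval_def f_closed f_involution)
next
  fix p
  assume "r = concat (replicate (t p) [1, p])" "2 \<le> p" "p \<le> n"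
  moreover have "word_eval G f [1, p] = f 1 \<otimes> f p"
    by (simp add: word_eval_def f_closed)
  ultimately show ?thesis
    using f_power_relation[of p] by (simp add: word_eval_concat_replicate)
qed

lemma word_eval_weq:
  assumes "(u, v) \<in> weq n t"
  shows "word_eval G f u = word_eval G f v"
proof -
  have "word_eval G f x = word_eval G f y" if "(x, y) \<in> wstep n t" for x y
  proof -
    from that obtain a r b where "x = a @ r @ b" "y = a @ b" "r \<in> relators n t"
      unfolding wstep_def by blast
    then show ?thesis
      by (simp add: word_eval_append word_eval_relator word_eval_closed)
  qed
  with assms show ?thesis
    unfolding weq_def by (induction rule: rtrancl_induct) auto
qed

lemma W_lift_class: "W_lift G f (weq n t `` {w}) = word_eval G f w"
  unfolding W_lift_def using word_eval_weq[OF some_in_weq_class] by simp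

lemma W_lift_hom: "W_lift G f \<in> hom (W n t) G"
proof (rule homI)
  fix x y
  assume "x \<in> carrier (W n t)" "y \<in> carrier (W n t)"
  then obtain a b where "x = weq n t `` {a}" "y = weq n t `` {b}"
    unfolding carrier_W by blast
  then show "W_lift G f (x \<otimes>\<^bsub>W n t\<^esub> y) = W_lift G f x \<otimes> W_lift G f y"
    by (simp add: mult_W W_lift_class word_eval_append)
qed (auto simp: carrier_W W_lift_class word_eval_closed)

lemma W_lift_gen: "W_lift G f (gen n t p) = f p"
  unfolding gen_def W_lift_class by (simp add: word_eval_def f_closed)

lemma group_hom_W_lift: "group_hom (W n t) G (W_lift G f)"
  by (intro group_hom.intro group_hom_axioms.intro group_W is_group W_lift_hom)

lemma image_Wsub:
  assumes "2 \<le> p" "p \<le> n"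
  shows "W_lift G f ` Wsub n t p = generate G {f 1, f p}"
proof -
  have "{gen n t 1, gen n t p} \<subseteq> carrier (W n t)"
    using assms by (simp add: gen_in_carrier_W)
  moreover have "W_lift G f ` {gen n t 1, gen n t p} = {f 1, f p}"
    by (simp add: W_lift_gen)
  ultimately show ?thesis
    unfolding Wsub_def using group_hom.generate_img[OF group_hom_W_lift] by metis
qed

end

text \<open>\<open>(s, c)\<close> stands for the affine map \<open>x \<mapsto> s x + c\<close> of \<open>\<int>/T\<close>, with \<open>s = \<plusminus>1\<close>.\<close>

definition dihedral :: "int \<Rightarrow> (int \<times> int) monoid" where
  "dihedral T = \<lparr>carrier = {1, -1} \<times> {0..<T},
                 monoid.mult = (\<lambda>(s, c) (s', c'). (s * s', (s * c' + c) mod T)),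
                 one = (1, 0)\<rparr>"

lemma carrier_dihedral: "carrier (dihedral T) = {1, -1} \<times> {0..<T}"
  and one_dihedral: "\<one>\<^bsub>dihedral T\<^esub> = (1, 0)"
  and mult_dihedral: "(s, c) \<otimes>\<^bsub>dihedral T\<^esub> (s', c') = (s * s', (s * c' + c) mod T)"
  by (simp_all add: dihedral_def)

lemma finite_carrier_dihedral: "finite (carrier (dihedral T))"
  by (simp add: carrier_dihedral)

lemma group_dihedral:
  assumes "0 < T"
  shows "group (dihedral T)"
proof (rule groupI)
  fix x y z
  assume "x \<in> carrier (dihedral T)" "y \<in> carrier (dihedral T)" "z \<in> carrier (dihedral T)"
  then obtain s c s' c' s'' c'' where "x = (s, c)" "y = (s', c')" "z = (s'', c'')"
    by (cases x, cases y, cases z) blast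
  moreover have "(s * s' * c'' + (s * c' + c) mod T) mod T = (s * (s' * c'' + c') + c) mod T"
    by (simp add: mod_add_right_eq algebra_simps)
  moreover have "\<dots> = (s * ((s' * c'' + c') mod T) + c) mod T"
    by (metis mod_add_left_eq mod_mult_right_eq)
  ultimately show "x \<otimes>\<^bsub>dihedral T\<^esub> y \<otimes>\<^bsub>dihedral T\<^esub> z = x \<otimes>\<^bsub>dihedral T\<^esub> (y \<otimes>\<^bsub>dihedral T\<^esub> z)"
    by (simp add: mult_dihedral mult.assoc)
next
  fix x
  assume "x \<in> carrier (dihedral T)"
  then obtain s c where x: "x = (s, c)" and s: "s \<in> {1, -1}"
    by (auto simp: carrier_dihedral)
  have "(s * c + (- s * c) mod T) mod T = 0"
    by (simp add: mod_add_right_eq)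
  then have "(s, (- s * c) mod T) \<otimes>\<^bsub>dihedral T\<^esub> x = (s * s, 0)"
    unfolding x mult_dihedral by (simp only:)
  also have "\<dots> = \<one>\<^bsub>dihedral T\<^esub>"
    using s by (auto simp: one_dihedral)
  finally show "\<exists>y\<in>carrier (dihedral T). y \<otimes>\<^bsub>dihedral T\<^esub> x = \<one>\<^bsub>dihedral T\<^esub>"
    using s assms by (intro bexI[of _ "(s, (- s * c) mod T)"]) (auto simp: carrier_dihedral)
qed (use assms in \<open>auto simp: carrier_dihedral one_dihedral mult_dihedral\<close>)

lemma dihedral_rotation_pow: "(1, c) [^]\<^bsub>dihedral T\<^esub> m = (1, (int m * c) mod T)"
  by (induction m) (simp_all add: one_dihedral mult_dihedral mod_simps algebra_simps)

definition dihedral_rep :: "nat \<Rightarrow> nat \<Rightarrow> int \<times> int" where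
  "dihedral_rep i x = (if x = i then (-1, 1) else (-1, 0))"

lemma W_representation_dihedral:
  assumes "2 \<le> t i" "i \<noteq> 1"
  shows "W_representation (dihedral (t i)) n t (dihedral_rep i)"
proof (intro W_representation.intro W_representation_axioms.intro)
  show "group (dihedral (t i))"
    using assms by (simp add: group_dihedral)
next
  fix p
  have "(1, (int (t i) * ((-1) mod int (t i))) mod int (t i)) = (1::int, 0::int)"
    by (simp add: mod_simps)
  then show "(dihedral_rep i 1 \<otimes>\<^bsub>dihedral (t i)\<^esub> dihedral_rep i p) [^]\<^bsub>dihedral (t i)\<^esub> t p
      = \<one>\<^bsub>dihedral (t i)\<^esub>"
    using assms by (simp add: dihedral_rep_def mult_dihedral one_dihedral dihedral_rotation_pow)
qed (use assms in \<open>auto simp: dihedral_rep_def carrier_dihedral mult_dihedral one_dihedral\<close>)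

lemma (in group) generate_involution:
  assumes "a \<in> carrier G" "a \<otimes> a = \<one>"
  shows "generate G {a} = {\<one>, a}"
proof
  have "inv a = a"
    using assms by (simp add: inv_equality)
  then have "subgroup {\<one>, a} G"
    using assms by (intro subgroupI) auto
  then show "generate G {a} \<subseteq> {\<one>, a}"
    by (simp add: generate_subgroup_incl)
qed (auto intro: generate.one generate.incl)

lemma generate_dihedral_reflection:
  assumes "0 < T"
  shows "generate (dihedral T) {(-1, 0)} = {(1, 0), (-1, 0)}"
  using group.generate_involution[OF group_dihedral[OF assms], of "(-1, 0)"] assms
  by (simp add: carrier_dihedral one_dihedral mult_dihedral)

lemma card_generate_dihedral_reflections:
  assumes "2 \<le> T"
  shows "3 \<le> card (generate (dihedral T) {(-1, 0), (-1, 1)})"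
proof -
  let ?K = "{(-1, 0), (-1, 1)} :: (int \<times> int) set"
  have "(1, 0) \<in> generate (dihedral T) ?K"
    using generate.one[of "dihedral T" ?K] by (simp add: one_dihedral)
  then have three: "{(1, 0), (-1, 0), (-1, 1)} \<subseteq> generate (dihedral T) ?K"
    using generate.incl[of _ ?K "dihedral T"] by blast
  have K: "?K \<subseteq> carrier (dihedral T)"
    using assms by (simp add: carrier_dihedral)
  have "group (dihedral T)"
    using assms by (simp add: group_dihedral)
  then have "generate (dihedral T) ?K \<subseteq> carrier (dihedral T)"
    using group.generate_in_carrier[OF _ K] by blast
  then have "finite (generate (dihedral T) ?K)"
    using finite_carrier_dihedral by (rule finite_subset)
  from card_mono[OF this three] show ?thesis
    by simp
qed

lemma (in group_hom) card_image_conjugate: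
  assumes "S \<subseteq> carrier G" "g \<in> carrier G"
  shows "card (h ` (\<lambda>x. g \<otimes> x \<otimes> inv g) ` S) = card (h ` S)"
proof -
  have "h (g \<otimes> x \<otimes> inv g) = h g \<otimes>\<^bsub>H\<^esub> h x \<otimes>\<^bsub>H\<^esub> inv\<^bsub>H\<^esub> h g" if "x \<in> S" for x
    using assms that by (simp add: subsetD)
  then have "h ` (\<lambda>x. g \<otimes> x \<otimes> inv g) ` S = (\<lambda>y. h g \<otimes>\<^bsub>H\<^esub> y \<otimes>\<^bsub>H\<^esub> inv\<^bsub>H\<^esub> h g) ` h ` S"
    by (simp add: image_image cong: image_cong)
  moreover have "inj_on (\<lambda>y. h g \<otimes>\<^bsub>H\<^esub> y \<otimes>\<^bsub>H\<^esub> inv\<^bsub>H\<^esub> h g) (h ` S)"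
  proof (rule inj_onI)
    fix y z
    assume "y \<in> h ` S" "z \<in> h ` S"
      and "h g \<otimes>\<^bsub>H\<^esub> y \<otimes>\<^bsub>H\<^esub> inv\<^bsub>H\<^esub> h g = h g \<otimes>\<^bsub>H\<^esub> z \<otimes>\<^bsub>H\<^esub> inv\<^bsub>H\<^esub> h g"
    moreover have "h g \<in> carrier H" "h ` S \<subseteq> carrier H"
      using assms by auto
    ultimately show "y = z"
      using H.conjugation_is_inj[of "h g" y z] by blast
  qed
  ultimately show ?thesis
    by (simp add: card_image)
qed

lemma sum_list_take_bracket:
  fixes k :: "nat list"
  assumes "0 < x" "x \<le> sum_list k"
  shows "\<exists>q<length k. sum_list (take q k) < x \<and> x \<le> sum_list (take (Suc q) k)"
  using assms
proof (induction k arbitrary: x)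
  case (Cons a k)
  show ?case
  proof (cases "x \<le> a")
    case True
    with Cons.prems show ?thesis by (intro exI[of _ 0]) auto
  next
    case False
    with Cons.prems have "0 < x - a" "x - a \<le> sum_list k"
      by auto
    then obtain q where
      "q < length k" "sum_list (take q k) < x - a" "x - a \<le> sum_list (take (Suc q) k)"
      using Cons.IH by blast
    with False show ?thesis by (intro exI[of _ "Suc q"]) auto
  qed
qed simp

lemma block_value_in_set:
  fixes m k :: "nat list" and n i :: nat
  assumes "length m = length k" "sum_list k = n - 1"
    and "\<forall>q<length k. \<forall>p. 1 + sum_list (take q k) < p \<and> p \<le> 1 + sum_list (take (Suc q) k)
              \<longrightarrow> t p = m ! q"
    and "2 \<le> i" "i \<le> n"
  shows "t i \<in> set m"
proof -
  have "0 < i - 1" "i - 1 \<le> sum_list k"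
    using assms(2,4,5) by auto
  then obtain q where "q < length k" "sum_list (take q k) < i - 1" "i - 1 \<le> sum_list (take (Suc q) k)"
    using sum_list_take_bracket by blast
  with assms show ?thesis by force
qed

theorem lemma3p4:
  fixes n l i j :: nat and m k :: "nat list" and t :: "nat \<Rightarrow> nat"
  assumes "n \<ge> 3"
    and "length m = l" and "length k = l"
    and "distinct m"
    and "\<forall>x\<in>set m. odd x \<and> x \<ge> 3"
    and "\<forall>x\<in>set k. x > 0"
    and "sum_list k = n - 1"
    and "\<forall>q<l. \<forall>p. 1 + sum_list (take q k) < p \<and> p \<le> 1 + sum_list (take (Suc q) k)
              \<longrightarrow> t p = m ! q"
    and "2 \<le> i" "i \<le> n" "2 \<le> j" "j \<le> n" "i \<noteq> j"
  shows "\<not> (\<exists>g\<in>carrier (W n t).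
             (\<lambda>h. g \<otimes>\<^bsub>W n t\<^esub> h \<otimes>\<^bsub>W n t\<^esub> inv\<^bsub>W n t\<^esub> g) ` Wsub n t i = Wsub n t j)"
proof
  assume "\<exists>g\<in>carrier (W n t).
      (\<lambda>h. g \<otimes>\<^bsub>W n t\<^esub> h \<otimes>\<^bsub>W n t\<^esub> inv\<^bsub>W n t\<^esub> g) ` Wsub n t i = Wsub n t j"
  then obtain g where g: "g \<in> carrier (W n t)"
    and conj: "(\<lambda>h. g \<otimes>\<^bsub>W n t\<^esub> h \<otimes>\<^bsub>W n t\<^esub> inv\<^bsub>W n t\<^esub> g) ` Wsub n t i = Wsub n t j"
    by blast
  have "2 \<le> t i"
    using block_value_in_set[of m k n t i] assms by auto
  define D where "D = dihedral (t i)"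
  interpret R: W_representation D n t "dihedral_rep i"
    unfolding D_def using \<open>2 \<le> t i\<close> assms(9) by (intro W_representation_dihedral) auto
  interpret h: group_hom "W n t" D "W_lift D (dihedral_rep i)"
    by (rule R.group_hom_W_lift)
  have image_i: "W_lift D (dihedral_rep i) ` Wsub n t i = generate D {(-1, 0), (-1, 1)}"
    using R.image_Wsub[OF assms(9,10)] assms(9) by (simp add: dihedral_rep_def)
  have image_j: "W_lift D (dihedral_rep i) ` Wsub n t j = generate D {(-1, 0)}"
    using R.image_Wsub[OF assms(11,12)] assms(9,13) by (simp add: dihedral_rep_def)
  have "card (generate D {(-1, 0), (-1, 1)}) = card (generate D {(-1, 0)})"
    using h.card_image_conjugate[OF Wsub_in_carrier_W[OF assms(9,10)] g]
    unfolding conj image_i image_j by (rule sym)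
  with \<open>2 \<le> t i\<close> show False
    using card_generate_dihedral_reflections[of "t i"] generate_dihedral_reflection[of "t i"]
    by (simp add: D_def)
qed

end
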